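(* Let $\varepsilon\in\{1,-1\}$, $1\le k\le n$ and $\sigma\in\mathcal D^\Delta_k$. Then $$\sum_{\pi\in\Delta^<_n,\ dp(\pi)=\sigma}\varepsilon^{\ell_B(\pi)}q^{\mathrm{fmaj}(\pi)}=\varepsilon^{\ell_B(\sigma)}q^{2(n-k)+\mathrm{fmaj}(\sigma)}{n-1\brack k-1}_{q^2}.$$
   Context: $B_n$ is the set of words $\pi=\pi_1\cdots\pi_n$ with $\pi_i\in\{\pm1,\dots,\pm n\}$ and $|\pi_1|\cdots|\pi_n|$ a permutation of $[n]$; $\Delta^<_n=\{\pi\in B_n:0<\pi_n<n\}$; $\mathcal D^\Delta_k$ is the set of $\sigma\in B_k$ with $\sigma_k>0$ and $\sigma_i\ne i$ for all $i$. $\mathrm{inv}$ in usual order, $\ell_B(\pi)=\mathrm{inv}(\pi)-\sum_{i:\pi_i<0}\pi_i$. Order $\prec$: $-1\prec-2\prec\cdots\prec-N\prec1\prec\cdots\prec N$; $\mathrm{maj}_\prec(w)=\sum_{i:w_i\succ w_{i+1}}i$; $\mathrm{fmaj}(w)=2\mathrm{maj}_\prec(w)+\mathrm{neg}(w)$ with $\mathrm{neg}(w)$ the number of negative letters. For a word of nonzero integers with distinct absolute values $a_1<\dots<a_m$, its reduction replaces each letter $\pm a_j$ by $\pm j$; $dp(\pi)$ is the reduction of the subword of letters $\pi_i$ with $\pi_i\ne i$. $[m]_x=1+x+\dots+x^{m-1}$, $[m]_x!=[1]_x\cdots[m]_x$, $[0]_x!=1$, ${n\brack k}_x=\frac{[n]_x!}{[k]_x![n-k]_x!}$.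 *)

theory Defs
  imports Complex_Main
begin

text \<open>Signed permutations (words) are lists of integers; positions are 1-indexed
  in the paper, so the paper's pi_i is the list element w ! (i - 1).\<close>

definition signed_perms :: "nat \<Rightarrow> int list set" where
  "signed_perms n = {w. length w = n \<and> set (map abs w) = {1..int n}}"

definition Delta_lt :: "nat \<Rightarrow> int list set" where
  "Delta_lt n = {w \<in> signed_perms n. 0 < w ! (n - 1) \<and> w ! (n - 1) < int n}"

definition D_Delta :: "nat \<Rightarrow> int list set" where
  "D_Delta k = {s \<in> signed_perms k. 0 < s ! (k - 1) \<and> (\<forall>i<k. s ! i \<noteq> int (i + 1))}"

definition inv_count :: "int list \<Rightarrow> nat" where
  "inv_count w = card {(i, j). i < j \<and> j < length w \<and> w ! i > w ! j}"

definition ellB :: "int list \<Rightarrow> int" where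
  "ellB w = int (inv_count w) - (\<Sum>i\<in>{i. i < length w \<and> w ! i < 0}. w ! i)"

definition prec :: "int \<Rightarrow> int \<Rightarrow> bool" where
  "prec a b \<longleftrightarrow> (a < 0 \<and> b > 0) \<or> (a < 0 \<and> b < 0 \<and> b < a) \<or> (a > 0 \<and> b > 0 \<and> a < b)"

text \<open>maj: sum of 1-indexed positions i with w_i succ w_(i+1).\<close>
definition maj_prec :: "int list \<Rightarrow> nat" where
  "maj_prec w = (\<Sum>i\<in>{i. 1 \<le> i \<and> i < length w \<and> prec (w ! i) (w ! (i - 1))}. i)"

definition neg :: "int list \<Rightarrow> nat" where
  "neg w = card {i. i < length w \<and> w ! i < 0}"

definition fmaj :: "int list \<Rightarrow> nat" where
  "fmaj w = 2 * maj_prec w + neg w"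

definition reduction :: "int list \<Rightarrow> int list" where
  "reduction w = map (\<lambda>x. sgn x * int (card {y \<in> set (map abs w). y \<le> abs x})) w"

definition dp :: "int list \<Rightarrow> int list" where
  "dp w = reduction (map fst (filter (\<lambda>(x, i). x \<noteq> int i) (zip w [1..<length w + 1])))"

definition qint :: "nat \<Rightarrow> real \<Rightarrow> real" where
  "qint m x = (\<Sum>i<m. x ^ i)"

definition qfact :: "nat \<Rightarrow> real \<Rightarrow> real" where
  "qfact m x = (\<Prod>i\<in>{1..m}. qint i x)"

definition qbinom :: "nat \<Rightarrow> nat \<Rightarrow> real \<Rightarrow> real" where
  "qbinom n k x = qfact n x / (qfact k x * qfact (n - k) x)"

end

theory Submission
  imports Defs
begin

text \<open>Deleting the fixed points of \<open>\<pi>\<close> and reducing yields \<open>\<sigma>\<close>; conversely \<open>\<pi>\<close> is recovered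
  from \<open>\<sigma>\<close> by inserting \<open>g ! t\<close> fixed points in front of the \<open>t\<close>-th letter and relabelling
  the letters so that their signs and relative order are kept.  This identifies the fibre with
  the weak compositions \<open>g\<close> of \<open>n - k\<close> into \<open>k\<close> parts (the condition \<open>0 < \<pi>_n < n\<close> says
  that \<open>\<pi>\<close> ends with a letter of \<open>\<sigma>\<close>).  Inserted fixed points leave the negative letters
  alone and change \<open>ellB\<close> by an even amount: around a fixed point \<open>f\<close> the letters of absolute
  value above \<open>f + 1\<close> on its left are as many as those below \<open>f + 1\<close> on its right.  The major
  index gains a contribution from each block of fixed points that depends only on whether the
  neighbouring letters of \<open>\<sigma>\<close> lie below their positions, and summing \<open>q\<^sup>2 ^ maj\<close> over the
  compositions, one part at a time, produces the Gaussian binomial through the \<open>q\<close>-Pascal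
  recurrences.\<close>

section \<open>Gaussian binomial coefficients\<close>

lemma qint_ge_1: "0 \<le> x \<Longrightarrow> 1 \<le> i \<Longrightarrow> 1 \<le> qint i x"
  unfolding qint_def
  by (cases i) (simp_all add: lessThan_Suc_eq_insert_0 sum.reindex sum_nonneg)

lemma qfact_pos: "0 \<le> x \<Longrightarrow> 0 < qfact m x"
  unfolding qfact_def by (rule prod_pos) (use qint_ge_1 in force)

lemma qfact_0 [simp]: "qfact 0 x = 1"
  by (simp add: qfact_def)

lemma qfact_Suc: "qfact (Suc m) x = qfact m x * qint (Suc m) x"
  unfolding qfact_def by (simp add: atLeastAtMostSuc_conv)

lemma qint_add: "qint (a + b) x = qint a x + x ^ a * qint b x"
  by (induction b) (simp_all add: qint_def power_add algebra_simps)

text \<open>\<open>gauss_binom x a b\<close> is \<open>[a + b, b]_x\<close>; taking the two complementary parts as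
  arguments avoids truncated subtraction.\<close>

definition gauss_binom :: "real \<Rightarrow> nat \<Rightarrow> nat \<Rightarrow> real" where
  "gauss_binom x a b = qfact (a + b) x / (qfact a x * qfact b x)"

lemma gauss_binom_eq_qbinom: "gauss_binom x a b = qbinom (a + b) b x"
  by (simp add: gauss_binom_def qbinom_def mult.commute)

lemma gauss_binom_0_left: "0 \<le> x \<Longrightarrow> gauss_binom x 0 b = 1"
  and gauss_binom_0_right: "0 \<le> x \<Longrightarrow> gauss_binom x a 0 = 1"
  using qfact_pos[of x a] qfact_pos[of x b] by (simp_all add: gauss_binom_def)

lemma gauss_binom_Suc_Suc:
  assumes "0 \<le> x"
  shows "gauss_binom x (Suc a) (Suc b) = gauss_binom x (Suc a) b + x ^ Suc b * gauss_binom x a (Suc b)"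
    and "gauss_binom x (Suc a) (Suc b) = x ^ Suc a * gauss_binom x (Suc a) b + gauss_binom x a (Suc b)"
proof -
  have top: "qfact (Suc a + Suc b) x = qfact (Suc a + b) x * qint (Suc a + Suc b) x"
    using qfact_Suc[of "Suc a + b" x] by simp
  have pos: "0 < qfact a x" "0 < qfact b x" "0 < qint (Suc a) x" "0 < qint (Suc b) x"
    using qfact_pos[OF assms] qint_ge_1[OF assms] by (auto intro: less_le_trans[OF zero_less_one])
  have "qint (Suc a + Suc b) x = qint (Suc b) x + x ^ Suc b * qint (Suc a) x"
    using qint_add[of "Suc b" "Suc a" x] by (simp add: add.commute)
  then show "gauss_binom x (Suc a) (Suc b) = gauss_binom x (Suc a) b + x ^ Suc b * gauss_binom x a (Suc b)"
    using pos unfolding gauss_binom_def top qfact_Suc[of a] qfact_Suc[of b]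
    by (simp add: field_simps)
  have "qint (Suc a + Suc b) x = qint (Suc a) x + x ^ Suc a * qint (Suc b) x"
    by (rule qint_add)
  then show "gauss_binom x (Suc a) (Suc b) = x ^ Suc a * gauss_binom x (Suc a) b + gauss_binom x a (Suc b)"
    using pos unfolding gauss_binom_def top qfact_Suc[of a] qfact_Suc[of b]
    by (simp add: field_simps)
qed

lemma gauss_binom_Suc_right_sum:
  assumes "0 \<le> x"
  shows "(\<Sum>s\<le>r. x ^ s * gauss_binom x s b) = gauss_binom x r (Suc b)"
  by (induction r) (simp_all add: gauss_binom_0_left gauss_binom_0_right gauss_binom_Suc_Suc(2) assms)

lemma gauss_binom_Suc_right_sum':
  assumes "0 \<le> x"
  shows "x ^ Suc b * (\<Sum>s<r. x ^ s * gauss_binom x s b) + gauss_binom x r b = gauss_binom x r (Suc b)"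
proof (cases r)
  case 0
  then show ?thesis using assms by (simp add: gauss_binom_0_left)
next
  case (Suc a)
  then show ?thesis
    using gauss_binom_Suc_right_sum[OF assms, where r = a and b = b] gauss_binom_Suc_Suc(1)[OF assms, of a b]
    by (simp add: lessThan_Suc_atMost)
qed

lemma gauss_binom_Suc_right_scaled:
  assumes "0 \<le> x" and "(a = c \<and> b = c + r) \<or> (a = c + Suc j \<and> b = c)"
  shows "x ^ a * (\<Sum>s<r. x ^ s * gauss_binom x s j) + x ^ b * gauss_binom x r j
       = x ^ c * gauss_binom x r (Suc j)"
  using assms(2)
proof
  assume "a = c \<and> b = c + r"
  then have "x ^ a * (\<Sum>s<r. x ^ s * gauss_binom x s j) + x ^ b * gauss_binom x r j
      = x ^ c * (\<Sum>s\<le>r. x ^ s * gauss_binom x s j)"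
    by (simp add: lessThan_Suc_atMost[symmetric] power_add algebra_simps)
  also have "\<dots> = x ^ c * gauss_binom x r (Suc j)"
    by (simp only: gauss_binom_Suc_right_sum[OF assms(1)])
  finally show ?thesis .
next
  assume "a = c + Suc j \<and> b = c"
  then have "x ^ a * (\<Sum>s<r. x ^ s * gauss_binom x s j) + x ^ b * gauss_binom x r j
      = x ^ c * (x ^ Suc j * (\<Sum>s<r. x ^ s * gauss_binom x s j) + gauss_binom x r j)"
    by (simp add: power_add algebra_simps)
  also have "\<dots> = x ^ c * gauss_binom x r (Suc j)"
    by (simp only: gauss_binom_Suc_right_sum'[OF assms(1)])
  finally show ?thesis .
qed

section \<open>Weak compositions weighted by a block-wise major index\<close>

definition weak_compositions :: "nat \<Rightarrow> nat \<Rightarrow> nat list set" where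
  "weak_compositions j r = {g. length g = j \<and> sum_list g = r}"

lemma finite_weak_compositions: "finite (weak_compositions j r)"
proof (rule finite_subset)
  show "weak_compositions j r \<subseteq> {g. set g \<subseteq> {..r} \<and> length g = j}"
    unfolding weak_compositions_def using member_le_sum_list by fastforce
qed (simp add: finite_lists_length_eq)

lemma weak_compositions_1: "weak_compositions (Suc 0) r = {[r]}"
  by (auto simp: weak_compositions_def length_Suc_conv)

lemma weak_compositions_Suc:
  "weak_compositions (Suc j) r = (\<lambda>(h, g). g @ [h]) ` (SIGMA h:{..r}. weak_compositions j (r - h))"
proof (intro set_eqI iffI)
  fix g assume "g \<in> weak_compositions (Suc j) r"
  then have len: "length g = Suc j" and sum: "sum_list g = r"
    by (auto simp: weak_compositions_def)
  then obtain g' h where "g = g' @ [h]"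
    by (metis length_Suc_conv_rev)
  with len sum show "g \<in> (\<lambda>(h, g). g @ [h]) ` (SIGMA h:{..r}. weak_compositions j (r - h))"
    by (auto simp: weak_compositions_def image_iff intro!: bexI[of _ "(h, g')"])
qed (auto simp: weak_compositions_def)

lemma sum_weak_compositions_Suc:
  "(\<Sum>g\<in>weak_compositions (Suc j) r. f g)
     = (\<Sum>h\<le>r. \<Sum>g\<in>weak_compositions j (r - h). f (g @ [h]))"
proof -
  have "inj_on (\<lambda>(h, g). g @ [h]) (SIGMA h:{..r}. weak_compositions j (r - h))"
    by (auto simp: inj_on_def)
  then show ?thesis
    unfolding weak_compositions_Suc
    by (simp add: sum.reindex sum.Sigma finite_weak_compositions split_def)
qed

text \<open>The major-index contribution of the \<open>t\<close>-th block of an inflated word: \<open>h\<close>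
  fixed points followed by the \<open>t\<close>-th letter, \<open>s\<close> fixed points having been inserted
  before.  Here \<open>lo t\<close> says that the \<open>t\<close>-th letter lies below the fixed points next
  to it, and \<open>dd t\<close> that letters \<open>t - 1\<close> and \<open>t\<close> form a descent.\<close>

definition block_maj :: "(nat \<Rightarrow> bool) \<Rightarrow> (nat \<Rightarrow> bool) \<Rightarrow> nat \<Rightarrow> nat \<Rightarrow> nat \<Rightarrow> nat" where
  "block_maj lo dd t s h =
     (if h = 0 then (if 0 < t \<and> dd t then t + s else 0)
      else (if 0 < t \<and> \<not> lo (t - 1) then t + s else 0) + (if lo t then t + s + h else 0))"

definition maj_weight :: "(nat \<Rightarrow> bool) \<Rightarrow> (nat \<Rightarrow> bool) \<Rightarrow> nat list \<Rightarrow> nat" where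
  "maj_weight lo dd g = (\<Sum>t<length g. block_maj lo dd t (sum_list (take t g)) (g ! t))"

lemma maj_weight_snoc:
  "maj_weight lo dd (g @ [h]) = maj_weight lo dd g + block_maj lo dd (length g) (sum_list g) h"
  unfolding maj_weight_def by (simp add: nth_append)

definition descent_sum :: "(nat \<Rightarrow> bool) \<Rightarrow> nat \<Rightarrow> nat" where
  "descent_sum dd j = (\<Sum>i\<in>{1..<j}. if dd i then i else 0)"

lemma descent_sum_Suc: "1 \<le> j \<Longrightarrow> descent_sum dd (Suc j) = descent_sum dd j + (if dd j then j else 0)"
  unfolding descent_sum_def by simp

lemma sum_atMost_split_reverse: "(\<Sum>h\<le>(r::nat). f h) = f 0 + (\<Sum>s<r. f (r - s))"
proof -
  have "(\<Sum>h\<le>r. f h) = (\<Sum>s\<le>r. f (r - s))"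
    using sum.atLeastAtMost_rev[of f 0 r] by (simp add: atLeast0AtMost)
  then show ?thesis
    by (simp add: lessThan_Suc_atMost[symmetric] add.commute)
qed

lemma sum_weak_compositions_maj_weight:
  assumes x: "0 \<le> x"
    and up: "\<And>t. 1 \<le> t \<Longrightarrow> t \<le> j \<Longrightarrow> \<not> lo (t - 1) \<Longrightarrow> lo t \<Longrightarrow> dd t"
    and down: "\<And>t. 1 \<le> t \<Longrightarrow> t \<le> j \<Longrightarrow> lo (t - 1) \<Longrightarrow> \<not> lo t \<Longrightarrow> \<not> dd t"
  shows "(\<Sum>g\<in>weak_compositions (Suc j) r. x ^ maj_weight lo dd g)
       = x ^ (descent_sum dd (Suc j) + (if lo j then r else 0)) * gauss_binom x r j"
  using up down
proof (induction j arbitrary: r)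
  case 0
  then show ?case
    by (simp add: weak_compositions_1 maj_weight_def block_maj_def descent_sum_def
        gauss_binom_0_right x)
next
  case (Suc j)
  define t where "t = Suc j"
  define D where "D = descent_sum dd t"
  define f where "f h = x ^ block_maj lo dd t (r - h) h
      * (x ^ (D + (if lo j then r - h else 0)) * gauss_binom x (r - h) j)" for h
  have IH: "(\<Sum>g\<in>weak_compositions t s. x ^ maj_weight lo dd g)
      = x ^ (D + (if lo j then s else 0)) * gauss_binom x s j" for s
    using Suc by (simp add: t_def D_def)
  have "(\<Sum>g\<in>weak_compositions (Suc t) r. x ^ maj_weight lo dd g)
      = (\<Sum>h\<le>r. x ^ block_maj lo dd t (r - h) h
                 * (\<Sum>g\<in>weak_compositions t (r - h). x ^ maj_weight lo dd g))"
    unfolding sum_weak_compositions_Suc sum_distrib_left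
    by (intro sum.cong refl) (simp add: maj_weight_snoc weak_compositions_def power_add)
  also have "\<dots> = f 0 + (\<Sum>s<r. f (r - s))"
    unfolding IH f_def by (rule sum_atMost_split_reverse)
  also have "\<dots> = x ^ (D + (if lo t then t + r else 0) + (if lo j then 0 else t))
        * (\<Sum>s<r. x ^ s * gauss_binom x s j)
      + x ^ (D + (if dd t then t + r else 0) + (if lo j then r else 0)) * gauss_binom x r j"
    by (simp add: f_def block_maj_def sum_distrib_left power_add t_def mult_ac)
  also have "\<dots> = x ^ (D + (if dd t then t else 0) + (if lo t then r else 0)) * gauss_binom x r t"
    unfolding t_def
    by (rule gauss_binom_Suc_right_scaled[OF x])
      (use Suc.prems(1)[of "Suc j"] Suc.prems(2)[of "Suc j"] in auto)
  finally show ?case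
    by (simp add: D_def descent_sum_Suc t_def)
qed

section \<open>Words, signed permutations and reduction\<close>

lemma maj_prec_eq_sum: "maj_prec w = (\<Sum>i\<in>{1..<length w}. if prec (w ! i) (w ! (i - 1)) then i else 0)"
proof -
  have "maj_prec w = (\<Sum>i\<in>{i \<in> {1..<length w}. prec (w ! i) (w ! (i - 1))}. i)"
    unfolding maj_prec_def by (rule sum.cong) auto
  also have "\<dots> = (\<Sum>i\<in>{1..<length w}. if prec (w ! i) (w ! (i - 1)) then i else 0)"
    by (rule sum.inter_filter) simp
  finally show ?thesis .
qed

lemma maj_prec_snoc:
  "maj_prec (w @ [y]) = maj_prec w + (if w \<noteq> [] \<and> prec y (last w) then length w else 0)"
proof (cases "w = []")
  case False
  then have "{1..<length (w @ [y])} = insert (length w) {1..<length w}"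
    by (auto simp: Suc_le_eq)
  moreover have "(\<Sum>i\<in>{1..<length w}. if prec ((w @ [y]) ! i) ((w @ [y]) ! (i - 1)) then i else 0)
      = maj_prec w"
    unfolding maj_prec_eq_sum by (intro sum.cong refl) (auto simp: nth_append)
  ultimately show ?thesis
    using False by (simp add: maj_prec_eq_sum[of "w @ [y]"] nth_append last_conv_nth)
qed (simp add: maj_prec_def)

lemma maj_prec_append_fixed_run:
  assumes "length w = a"
  shows "maj_prec (w @ map (\<lambda>i. int (i + 1)) [a..<b])
       = maj_prec w + (if a < b \<and> w \<noteq> [] \<and> prec (int (a + 1)) (last w) then a else 0)"
proof (induction b)
  case (Suc b)
  show ?case
  proof (cases "a \<le> b")
    case True
    have snoc: "w @ map (\<lambda>i. int (i + 1)) [a..<Suc b]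
        = (w @ map (\<lambda>i. int (i + 1)) [a..<b]) @ [int (b + 1)]"
      using True by simp
    show ?thesis
    proof (cases "a = b")
      case False
      then have "\<not> prec (int (b + 1)) (last (w @ map (\<lambda>i. int (i + 1)) [a..<b]))"
        using True by (simp add: last_map prec_def)
      then show ?thesis
        unfolding snoc maj_prec_snoc using Suc True False by simp
    qed (use Suc assms in \<open>simp add: snoc maj_prec_snoc\<close>)
  qed (use Suc in \<open>simp add: not_less_eq_eq\<close>)
qed simp

lemma image_int_Suc_lessThan: "(\<lambda>i. int (i + 1)) ` {..<n} = {1..int n}"
proof (intro set_eqI iffI)
  fix v assume "v \<in> {1..int n}"
  then show "v \<in> (\<lambda>i. int (i + 1)) ` {..<n}"
    by (intro image_eqI[where x = "nat v - 1"]) auto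
qed auto

lemma signed_perms_length: "w \<in> signed_perms n \<Longrightarrow> length w = n"
  and signed_perms_abs_set: "w \<in> signed_perms n \<Longrightarrow> abs ` set w = {1..int n}"
  by (simp_all add: signed_perms_def)

lemma signed_perms_nth_abs_bounds:
  "w \<in> signed_perms n \<Longrightarrow> i < n \<Longrightarrow> 1 \<le> \<bar>w ! i\<bar> \<and> \<bar>w ! i\<bar> \<le> int n"
  using signed_perms_abs_set signed_perms_length by (metis atLeastAtMost_iff image_eqI nth_mem)

lemma signed_perms_nth_nonzero: "w \<in> signed_perms n \<Longrightarrow> i < n \<Longrightarrow> w ! i \<noteq> 0"
  using signed_perms_nth_abs_bounds by fastforce

lemma signed_perms_nth_abs_inj:
  assumes "w \<in> signed_perms n" "i < n" "j < n" "\<bar>w ! i\<bar> = \<bar>w ! j\<bar>"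
  shows "i = j"
proof -
  have "card (set (map abs w)) = length w"
    using signed_perms_abs_set[OF assms(1)] signed_perms_length[OF assms(1)] by simp
  then have "distinct (map abs w)"
    by (simp add: card_distinct)
  then show ?thesis
    using assms signed_perms_length[OF assms(1)] unfolding distinct_conv_nth
    by (metis length_map nth_map)
qed

lemma signed_perms_nth_abs_surj:
  assumes "w \<in> signed_perms n" "1 \<le> v" "v \<le> int n"
  obtains i where "i < n" "\<bar>w ! i\<bar> = v"
proof -
  have "v \<in> abs ` set w"
    using assms signed_perms_abs_set by simp
  then show ?thesis
    using that signed_perms_length[OF assms(1)] by (auto simp: in_set_conv_nth)
qed

text \<open>The fixed positions use up exactly their own absolute values.\<close>

lemma signed_perms_abs_nonfixed:
  assumes w: "w \<in> signed_perms n"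
  shows "(\<lambda>i. \<bar>w ! i\<bar>) ` {i. i < n \<and> w ! i \<noteq> int (i + 1)}
       = (\<lambda>i. int (i + 1)) ` {i. i < n \<and> w ! i \<noteq> int (i + 1)}"
proof -
  let ?F = "{i. i < n \<and> w ! i = int (i + 1)}"
  have nonfixed: "{i. i < n \<and> w ! i \<noteq> int (i + 1)} = {..<n} - ?F"
    by auto
  have diff: "f ` ({..<n} - ?F) = f ` {..<n} - f ` ?F" if "inj_on f {..<n}" for f :: "nat \<Rightarrow> int"
    by (rule inj_on_image_set_diff[OF that]) auto
  have inj: "inj_on (\<lambda>i. \<bar>w ! i\<bar>) {..<n}" "inj_on (\<lambda>i. int (i + 1)) {..<n}"
    using signed_perms_nth_abs_inj[OF w] by (auto simp: inj_on_def)
  have all_abs: "(\<lambda>i. \<bar>w ! i\<bar>) ` {..<n} = {1..int n}"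
  proof (intro set_eqI iffI)
    fix v assume "v \<in> {1..int n}"
    then show "v \<in> (\<lambda>i. \<bar>w ! i\<bar>) ` {..<n}"
      using signed_perms_nth_abs_surj[OF w] by (metis atLeastAtMost_iff imageI lessThan_iff)
  qed (use signed_perms_nth_abs_bounds[OF w] in auto)
  have fixed: "(\<lambda>i. \<bar>w ! i\<bar>) ` ?F = (\<lambda>i. int (i + 1)) ` ?F"
    by (intro image_cong) auto
  show ?thesis
    unfolding nonfixed diff[OF inj(1)] diff[OF inj(2)] all_abs image_int_Suc_lessThan fixed ..
qed

lemma reduction_nth_rank:
  fixes f :: "nat \<Rightarrow> int"
  assumes mono: "strict_mono_on {..<m} f" and abs_set: "abs ` set u = f ` {..<m}"
    and t: "t < length u" and a: "a < m" "\<bar>u ! t\<bar> = f a"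
  shows "reduction u ! t = sgn (u ! t) * int (a + 1)"
proof -
  have "{y \<in> set (map abs u). y \<le> \<bar>u ! t\<bar>} = f ` {..a}"
    using a mono abs_set
    by (auto simp: strict_mono_on_less_eq image_iff intro: strict_mono_on_leD)
  moreover have "inj_on f {..a}"
    using a strict_mono_on_imp_inj_on[OF mono] by (auto simp: inj_on_def)
  ultimately show ?thesis
    using t by (simp add: reduction_def card_image)
qed

definition nonfixed_positions :: "int list \<Rightarrow> nat list" where
  "nonfixed_positions w = filter (\<lambda>i. w ! i \<noteq> int (i + 1)) [0..<length w]"

lemma dp_eq_reduction_nonfixed: "dp w = reduction (map ((!) w) (nonfixed_positions w))"
proof -
  have "zip w [1..<length w + 1] = map (\<lambda>i. (w ! i, Suc i)) [0..<length w]"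
    by (rule nth_equalityI) (auto simp del: upt_Suc)
  then show ?thesis
    by (simp add: dp_def nonfixed_positions_def filter_map o_def)
qed

lemma sorted_nonfixed_positions: "sorted_wrt (<) (nonfixed_positions w)"
  unfolding nonfixed_positions_def by (rule sorted_wrt_filter) (simp add: sorted_wrt_upt)

lemma set_nonfixed_positions:
  "set (nonfixed_positions w) = {i. i < length w \<and> w ! i \<noteq> int (i + 1)}"
  by (auto simp: nonfixed_positions_def)

lemma length_dp: "length (dp w) = length (nonfixed_positions w)"
  by (simp add: dp_eq_reduction_nonfixed reduction_def)

lemma last_nonfixed_positions_Delta_lt:
  assumes "\<pi> \<in> Delta_lt n"
  shows "nonfixed_positions \<pi> \<noteq> [] \<and> last (nonfixed_positions \<pi>) = n - 1"
proof -
  have "length \<pi> = n" "0 < \<pi> ! (n - 1)" "\<pi> ! (n - 1) < int n"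
    using assms by (auto simp: Delta_lt_def signed_perms_def)
  moreover from this have "[0..<n] = [0..<n - 1] @ [n - 1]"
    by (cases n) auto
  ultimately show ?thesis
    by (simp add: nonfixed_positions_def)
qed

section \<open>Inflating a word by fixed points\<close>

definition letter_pos :: "nat list \<Rightarrow> nat \<Rightarrow> nat" where
  "letter_pos g t = t + sum_list (take (Suc t) g)"

lemma sum_list_take_mono: "m \<le> m' \<Longrightarrow> sum_list (take m g) \<le> sum_list (take m' (g :: nat list))"
  by (metis le_add1 le_add_diff_inverse sum_list_append take_add)

lemma strict_mono_letter_pos: "strict_mono (letter_pos g)"
  unfolding strict_mono_Suc_iff by (simp add: letter_pos_def less_Suc_eq_le sum_list_take_mono)

lemma letter_pos_ge: "t \<le> letter_pos g t"
  by (simp add: letter_pos_def)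

lemma letter_pos_Suc: "Suc t < length g \<Longrightarrow> letter_pos g (Suc t) = letter_pos g t + 1 + g ! Suc t"
  unfolding letter_pos_def by (simp add: take_Suc_conv_app_nth)

lemma letter_pos_last: "length g \<le> Suc t \<Longrightarrow> letter_pos g t = t + sum_list g"
  by (simp add: letter_pos_def)

lemma letter_pos_eq_imp_eq:
  assumes "length g = length g'" and "\<And>t. t < length g \<Longrightarrow> letter_pos g t = letter_pos g' t"
  shows "g = g'"
proof (rule nth_equalityI)
  fix t assume t: "t < length g"
  show "g ! t = g' ! t"
  proof (cases t)
    case 0
    then show ?thesis
      using assms(2)[of 0] t assms(1) by (simp add: letter_pos_def take_Suc_conv_app_nth)
  next
    case (Suc t0)
    then show ?thesis
      using assms(2)[of t] assms(2)[of t0] letter_pos_Suc[of t0 g] letter_pos_Suc[of t0 g'] t assms(1)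
      by simp
  qed
qed (fact assms(1))

definition gaps :: "nat list \<Rightarrow> nat list" where
  "gaps Q = map (\<lambda>t. if t = 0 then Q ! 0 else Q ! t - Q ! (t - 1) - 1) [0..<length Q]"

lemma letter_pos_gaps:
  assumes "sorted_wrt (<) Q" "t < length Q"
  shows "letter_pos (gaps Q) t = Q ! t"
  using assms(2)
proof (induction t)
  case 0
  then show ?case by (simp add: letter_pos_def gaps_def take_Suc_conv_app_nth)
next
  case (Suc t)
  have "Q ! t < Q ! Suc t"
    using assms(1) Suc.prems sorted_wrt_nth_less by blast
  then show ?case
    using Suc letter_pos_Suc[of t "gaps Q"] by (simp add: gaps_def)
qed

definition relabel :: "nat list \<Rightarrow> int \<Rightarrow> int" where
  "relabel g x = sgn x * int (letter_pos g (nat \<bar>x\<bar> - 1) + 1)"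

lemma relabel_pos_iff: "0 < relabel g x \<longleftrightarrow> 0 < x"
  and relabel_neg_iff: "relabel g x < 0 \<longleftrightarrow> x < 0"
  unfolding relabel_def by (auto simp: sgn_if)

lemma abs_relabel: "x \<noteq> 0 \<Longrightarrow> \<bar>relabel g x\<bar> = int (letter_pos g (nat \<bar>x\<bar> - 1) + 1)"
  unfolding relabel_def by (auto simp: abs_mult sgn_if)

lemma sgn_relabel: "sgn (relabel g x) = sgn x"
  by (simp add: relabel_def sgn_mult)

lemma sgn_mult_mono_less_iff:
  fixes F :: "int \<Rightarrow> int"
  assumes mono: "\<And>u v. 0 < u \<Longrightarrow> 0 < v \<Longrightarrow> F u < F v \<longleftrightarrow> u < v"
    and pos: "\<And>u. 0 < u \<Longrightarrow> 0 < F u" and "x \<noteq> 0" "y \<noteq> 0"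
  shows "sgn x * F \<bar>x\<bar> < sgn y * F \<bar>y\<bar> \<longleftrightarrow> x < y"
proof (cases "0 < x"; cases "0 < y")
  assume "0 < x" "0 < y"
  then show ?thesis using mono by simp
next
  assume "0 < x" "\<not> 0 < y"
  then show ?thesis using pos[of x] pos[of "-y"] \<open>y \<noteq> 0\<close> by simp
next
  assume "\<not> 0 < x" "0 < y"
  then show ?thesis using pos[of y] pos[of "-x"] \<open>x \<noteq> 0\<close> by simp
next
  assume "\<not> 0 < x" "\<not> 0 < y"
  then show ?thesis using mono[of "-y" "-x"] \<open>x \<noteq> 0\<close> \<open>y \<noteq> 0\<close> by simp
qed

lemma relabel_less_iff: "x \<noteq> 0 \<Longrightarrow> y \<noteq> 0 \<Longrightarrow> relabel g x < relabel g y \<longleftrightarrow> x < y"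
  unfolding relabel_def
  by (rule sgn_mult_mono_less_iff) (auto simp: strict_mono_less[OF strict_mono_letter_pos] nat_diff_distrib)

lemma prec_relabel_iff: "x \<noteq> 0 \<Longrightarrow> y \<noteq> 0 \<Longrightarrow> prec (relabel g x) (relabel g y) \<longleftrightarrow> prec x y"
  unfolding prec_def by (simp add: relabel_less_iff relabel_pos_iff relabel_neg_iff)

text \<open>Inflating \<open>\<sigma>\<close> by \<open>g\<close> inserts \<open>g ! t\<close> fixed points in front of the \<open>t\<close>-th letter,
  which thereby moves to position \<open>letter_pos g t\<close>, and relabels the letters accordingly.\<close>

primrec inflate_prefix :: "int list \<Rightarrow> nat list \<Rightarrow> nat \<Rightarrow> int list" where
  "inflate_prefix \<sigma> g 0 = []"
| "inflate_prefix \<sigma> g (Suc t) = inflate_prefix \<sigma> g t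
     @ map (\<lambda>i. int (i + 1)) [length (inflate_prefix \<sigma> g t)..<letter_pos g t] @ [relabel g (\<sigma> ! t)]"

definition inflate :: "int list \<Rightarrow> nat list \<Rightarrow> int list" where
  "inflate \<sigma> g = inflate_prefix \<sigma> g (length \<sigma>)"

lemma length_inflate_prefix: "length (inflate_prefix \<sigma> g t) = t + sum_list (take t g)"
proof (induction t)
  case (Suc t)
  then have "length (inflate_prefix \<sigma> g t) \<le> letter_pos g t"
    by (simp add: letter_pos_def sum_list_take_mono)
  then show ?case
    by (simp add: letter_pos_def)
qed simp

lemma length_inflate_prefix_le_letter_pos: "length (inflate_prefix \<sigma> g t) \<le> letter_pos g t"
  by (simp add: length_inflate_prefix letter_pos_def sum_list_take_mono)

lemma inflate_prefix_nth_letter: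
  "t' < t \<Longrightarrow> inflate_prefix \<sigma> g t ! letter_pos g t' = relabel g (\<sigma> ! t')"
proof (induction t)
  case (Suc t)
  show ?case
  proof (cases "t' = t")
    case True
    then show ?thesis
      using length_inflate_prefix_le_letter_pos[of \<sigma> g t] by (simp add: nth_append)
  next
    case False
    then have "letter_pos g t' < length (inflate_prefix \<sigma> g t)"
      using Suc.prems strict_mono_less_eq[OF strict_mono_letter_pos[of g], where x = t' and y = "t - 1"]
      by (cases t) (auto simp: length_inflate_prefix letter_pos_def)
    then show ?thesis
      using Suc False by (simp add: nth_append)
  qed
qed simp

lemma inflate_prefix_nth_fixed:
  "i < length (inflate_prefix \<sigma> g t) \<Longrightarrow> i \<notin> letter_pos g ` {..<t}
     \<Longrightarrow> inflate_prefix \<sigma> g t ! i = int (i + 1)"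
proof (induction t)
  case (Suc t)
  have "length (inflate_prefix \<sigma> g (Suc t)) = letter_pos g t + 1"
    using length_inflate_prefix_le_letter_pos[of \<sigma> g t] by simp
  then show ?case
    using Suc length_inflate_prefix_le_letter_pos[of \<sigma> g t]
    by (auto simp: nth_append lessThan_Suc not_less)
qed simp

locale inflation =
  fixes \<sigma> :: "int list" and k :: nat
  assumes sigma: "\<sigma> \<in> D_Delta k" and k_pos: "1 \<le> k"
begin

lemma sigma_signed: "\<sigma> \<in> signed_perms k"
  using sigma by (simp add: D_Delta_def)

lemma length_sigma: "length \<sigma> = k"
  using sigma_signed by (rule signed_perms_length)

lemma sigma_last_pos: "0 < \<sigma> ! (k - 1)"
  using sigma by (simp add: D_Delta_def)

lemma sigma_nonfixed: "t < k \<Longrightarrow> \<sigma> ! t \<noteq> int (t + 1)"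
  using sigma by (simp add: D_Delta_def)

lemma sigma_nonzero: "t < k \<Longrightarrow> \<sigma> ! t \<noteq> 0"
  using sigma_signed by (rule signed_perms_nth_nonzero)

lemma sigma_abs_index_less: "t < k \<Longrightarrow> nat \<bar>\<sigma> ! t\<bar> - 1 < k"
  using signed_perms_nth_abs_bounds[OF sigma_signed] by fastforce

lemma sigma_abs_index_image: "(\<lambda>t. nat \<bar>\<sigma> ! t\<bar> - 1) ` {..<k} = {..<k}"
proof (intro set_eqI iffI)
  fix a assume "a \<in> {..<k}"
  then obtain t where "t < k" "\<bar>\<sigma> ! t\<bar> = int (a + 1)"
    using signed_perms_nth_abs_surj[OF sigma_signed, of "int (a + 1)"] by auto
  then show "a \<in> (\<lambda>t. nat \<bar>\<sigma> ! t\<bar> - 1) ` {..<k}"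
    by (intro image_eqI[where x = t]) auto
qed (use sigma_abs_index_less in auto)

lemma abs_relabel_image:
  "(\<lambda>t. \<bar>relabel g (\<sigma> ! t)\<bar>) ` {..<k} = (\<lambda>a. int (letter_pos g a + 1)) ` {..<k}"
proof -
  have "(\<lambda>t. \<bar>relabel g (\<sigma> ! t)\<bar>) ` {..<k}
      = (\<lambda>a. int (letter_pos g a + 1)) ` (\<lambda>t. nat \<bar>\<sigma> ! t\<bar> - 1) ` {..<k}"
    unfolding image_image by (intro image_cong refl) (simp add: abs_relabel sigma_nonzero)
  then show ?thesis
    by (simp only: sigma_abs_index_image)
qed

context
  fixes g :: "nat list"
  assumes g: "length g = k"
begin

lemma length_inflate: "length (inflate \<sigma> g) = k + sum_list g"
  using g by (simp add: inflate_def length_inflate_prefix length_sigma)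

lemma inflate_nth_letter: "t < k \<Longrightarrow> inflate \<sigma> g ! letter_pos g t = relabel g (\<sigma> ! t)"
  by (simp add: inflate_def length_sigma inflate_prefix_nth_letter)

lemma inflate_nth_fixed:
  "i < length (inflate \<sigma> g) \<Longrightarrow> i \<notin> letter_pos g ` {..<k} \<Longrightarrow> inflate \<sigma> g ! i = int (i + 1)"
  unfolding inflate_def length_sigma by (rule inflate_prefix_nth_fixed)

lemma letter_pos_last_letter: "letter_pos g (k - 1) = length (inflate \<sigma> g) - 1"
  using g k_pos by (simp add: letter_pos_last length_inflate)

lemma letter_pos_less_length: "t < k \<Longrightarrow> letter_pos g t < length (inflate \<sigma> g)"
proof -
  assume "t < k"
  then have "letter_pos g t \<le> letter_pos g (k - 1)"
    by (simp add: strict_mono_less_eq[OF strict_mono_letter_pos])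
  then show ?thesis
    using letter_pos_last_letter k_pos by (simp add: length_inflate)
qed

lemma relabel_letter_nonfixed: "t < k \<Longrightarrow> relabel g (\<sigma> ! t) \<noteq> int (letter_pos g t + 1)"
proof
  assume t: "t < k" and eq: "relabel g (\<sigma> ! t) = int (letter_pos g t + 1)"
  then have "0 < relabel g (\<sigma> ! t)"
    by simp
  then have pos: "0 < \<sigma> ! t"
    by (simp add: relabel_pos_iff)
  then have "letter_pos g (nat (\<sigma> ! t) - 1) = letter_pos g t"
    using eq by (simp add: relabel_def)
  then have "nat (\<sigma> ! t) - 1 = t"
    using strict_mono_eq[OF strict_mono_letter_pos] by blast
  then show False
    using sigma_nonfixed[OF t] pos by auto
qed

lemma inflate_nonfixed_iff:
  "i < length (inflate \<sigma> g) \<Longrightarrow> inflate \<sigma> g ! i \<noteq> int (i + 1) \<longleftrightarrow> i \<in> letter_pos g ` {..<k}"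
  using inflate_nth_fixed inflate_nth_letter relabel_letter_nonfixed by auto

lemma inflate_signed_perm: "inflate \<sigma> g \<in> signed_perms (k + sum_list g)"
proof -
  let ?n = "length (inflate \<sigma> g)" and ?L = "letter_pos g ` {..<k}"
  have L: "?L \<subseteq> {..<?n}"
    using letter_pos_less_length by auto
  have "(\<lambda>i. \<bar>inflate \<sigma> g ! i\<bar>) ` ?L = (\<lambda>i. int (i + 1)) ` ?L"
    using abs_relabel_image unfolding image_image by (simp add: inflate_nth_letter)
  moreover have "(\<lambda>i. \<bar>inflate \<sigma> g ! i\<bar>) ` ({..<?n} - ?L) = (\<lambda>i. int (i + 1)) ` ({..<?n} - ?L)"
    by (intro image_cong refl) (simp add: inflate_nth_fixed)
  ultimately have all: "(\<lambda>i. \<bar>inflate \<sigma> g ! i\<bar>) ` {..<?n} = (\<lambda>i. int (i + 1)) ` {..<?n}"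
    using L by (metis Un_Diff_cancel2 image_Un sup.absorb_iff1)
  have "abs ` set (inflate \<sigma> g) = abs ` (!) (inflate \<sigma> g) ` {..<?n}"
    using nth_image[of ?n "inflate \<sigma> g"] by (simp add: atLeast0LessThan)
  also have "\<dots> = {1..int ?n}"
    unfolding image_image all by (rule image_int_Suc_lessThan)
  finally have "abs ` set (inflate \<sigma> g) = {1..int ?n}" .
  then show ?thesis
    by (simp add: signed_perms_def length_inflate)
qed

lemma nonfixed_positions_inflate: "nonfixed_positions (inflate \<sigma> g) = map (letter_pos g) [0..<k]"
proof (rule sorted_distinct_set_unique)
  show "sorted (nonfixed_positions (inflate \<sigma> g))" "distinct (nonfixed_positions (inflate \<sigma> g))"
    by (simp_all add: nonfixed_positions_def sorted_wrt_filter)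
  show "sorted (map (letter_pos g) [0..<k])" "distinct (map (letter_pos g) [0..<k])"
    using strict_mono_letter_pos[of g]
    by (auto simp: sorted_iff_nth_mono distinct_map strict_mono_less_eq strict_mono_imp_inj_on)
  show "set (nonfixed_positions (inflate \<sigma> g)) = set (map (letter_pos g) [0..<k])"
    using inflate_nonfixed_iff letter_pos_less_length relabel_letter_nonfixed
    by (auto simp: nonfixed_positions_def inflate_nth_letter)
qed

lemma dp_inflate: "dp (inflate \<sigma> g) = \<sigma>"
proof (rule nth_equalityI)
  let ?u = "map (\<lambda>t. relabel g (\<sigma> ! t)) [0..<k]"
  have u: "map ((!) (inflate \<sigma> g)) (nonfixed_positions (inflate \<sigma> g)) = ?u"
    by (simp add: nonfixed_positions_inflate inflate_nth_letter)
  show "length (dp (inflate \<sigma> g)) = length \<sigma>"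
    by (simp add: dp_eq_reduction_nonfixed u reduction_def length_sigma)
  fix t assume "t < length (dp (inflate \<sigma> g))"
  then have t: "t < k"
    by (simp add: dp_eq_reduction_nonfixed u reduction_def)
  have abs_u: "abs ` set ?u = (\<lambda>a. int (letter_pos g a + 1)) ` {..<k}"
    using abs_relabel_image by (simp add: image_image atLeast0LessThan)
  have "reduction ?u ! t = sgn (?u ! t) * int (nat \<bar>\<sigma> ! t\<bar> - 1 + 1)"
    using t sigma_abs_index_less[OF t]
    by (intro reduction_nth_rank[OF _ abs_u])
      (auto simp: strict_mono_on_def strict_mono_less[OF strict_mono_letter_pos] abs_relabel sigma_nonzero)
  also have "\<dots> = sgn (\<sigma> ! t) * \<bar>\<sigma> ! t\<bar>"
    using sigma_nonzero[OF t] t by (simp add: sgn_relabel)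
  also have "\<dots> = \<sigma> ! t"
    by (rule sgn_mult_abs)
  finally show "dp (inflate \<sigma> g) ! t = \<sigma> ! t"
    by (simp add: dp_eq_reduction_nonfixed u)
qed

lemma inflate_Delta_lt: "inflate \<sigma> g \<in> Delta_lt (k + sum_list g)"
proof -
  let ?n = "k + sum_list g"
  define a where "a = nat (\<sigma> ! (k - 1)) - 1"
  have "\<sigma> ! (k - 1) \<noteq> int k" "\<bar>\<sigma> ! (k - 1)\<bar> \<le> int k"
    using sigma_nonfixed[of "k - 1"] signed_perms_nth_abs_bounds[OF sigma_signed, of "k - 1"] k_pos
    by auto
  then have "a < k - 1"
    using sigma_last_pos k_pos by (simp add: a_def)
  then have "letter_pos g a < letter_pos g (k - 1)"
    by (simp add: strict_mono_less[OF strict_mono_letter_pos])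
  moreover have "inflate \<sigma> g ! (?n - 1) = int (letter_pos g a + 1)"
    using inflate_nth_letter[of "k - 1"] letter_pos_last_letter k_pos sigma_last_pos
    by (simp add: length_inflate relabel_def a_def)
  ultimately show ?thesis
    using inflate_signed_perm letter_pos_last_letter by (simp add: Delta_lt_def length_inflate)
qed

end

end

section \<open>The fibre of \<open>dp\<close> over \<open>\<sigma>\<close>\<close>

context inflation
begin

lemma inflate_inj:
  assumes "length g = k" "length g' = k" "inflate \<sigma> g = inflate \<sigma> g'"
  shows "g = g'"
proof (rule letter_pos_eq_imp_eq)
  have "map (letter_pos g) [0..<k] = map (letter_pos g') [0..<k]"
    using nonfixed_positions_inflate assms by metis
  then show "\<And>t. t < length g \<Longrightarrow> letter_pos g t = letter_pos g' t"
    using assms(1) by (simp add: map_eq_conv)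
qed (use assms in simp)

lemma nonfixed_nth_eq_relabel:
  assumes \<pi>: "\<pi> \<in> signed_perms n" and dp: "dp \<pi> = \<sigma>"
    and pos: "\<And>t. t < k \<Longrightarrow> letter_pos g t = nonfixed_positions \<pi> ! t" and t: "t < k"
  shows "\<pi> ! (nonfixed_positions \<pi> ! t) = relabel g (\<sigma> ! t)"
proof -
  let ?Q = "nonfixed_positions \<pi>" and ?f = "\<lambda>a. int (nonfixed_positions \<pi> ! a + 1)"
  let ?u = "map ((!) \<pi>) ?Q" and ?v = "\<pi> ! (nonfixed_positions \<pi> ! t)"
  have lQ: "length ?Q = k"
    using dp length_dp length_sigma by metis
  have mono: "strict_mono_on {..<k} ?f"
    using sorted_nonfixed_positions[of \<pi>] lQ by (auto simp: strict_mono_on_def sorted_wrt_iff_nth_less)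
  have "abs ` set ?u = (\<lambda>i. \<bar>\<pi> ! i\<bar>) ` set ?Q"
    by (simp add: image_image)
  also have "\<dots> = (\<lambda>i. int (i + 1)) ` set ?Q"
    using signed_perms_abs_nonfixed[OF \<pi>] signed_perms_length[OF \<pi>]
    by (simp add: set_nonfixed_positions)
  also have "\<dots> = ?f ` {..<k}"
    using lQ by (auto simp: in_set_conv_nth image_iff)
  finally have abs_u: "abs ` set ?u = ?f ` {..<k}" .
  then obtain a where a: "a < k" "\<bar>?v\<bar> = ?f a"
    using t lQ by (metis (no_types, lifting) imageE imageI length_map lessThan_iff nth_map nth_mem)
  have "\<sigma> ! t = reduction ?u ! t"
    using dp by (simp add: dp_eq_reduction_nonfixed)
  also have "\<dots> = sgn ?v * int (a + 1)"
    using reduction_nth_rank[OF mono abs_u, of t a] t lQ a by simp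
  finally have sigma_t: "\<sigma> ! t = sgn ?v * int (a + 1)" .
  then have "nat \<bar>\<sigma> ! t\<bar> - 1 = a" "sgn (\<sigma> ! t) = sgn ?v"
    using a by (auto simp: abs_mult sgn_mult)
  then have "relabel g (\<sigma> ! t) = sgn ?v * \<bar>?v\<bar>"
    using a pos[OF a(1)] by (simp add: relabel_def)
  then show ?thesis
    by (simp add: sgn_mult_abs)
qed

lemma Delta_lt_dp_eq_inflate:
  assumes \<pi>: "\<pi> \<in> Delta_lt n" and dp: "dp \<pi> = \<sigma>"
  obtains g where "length g = k" "sum_list g = n - k" "\<pi> = inflate \<sigma> g"
proof -
  let ?Q = "nonfixed_positions \<pi>"
  define g where "g = gaps ?Q"
  have \<pi>_signed: "\<pi> \<in> signed_perms n" and ln: "length \<pi> = n"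
    using \<pi> by (auto simp: Delta_lt_def signed_perms_def)
  have lQ: "length ?Q = k"
    using dp length_dp length_sigma by metis
  have lg: "length g = k"
    using lQ by (simp add: g_def gaps_def)
  have pos: "letter_pos g t = ?Q ! t" if "t < k" for t
    using letter_pos_gaps[OF sorted_nonfixed_positions] that lQ by (simp add: g_def)
  have "?Q ! (k - 1) = n - 1"
    using last_nonfixed_positions_Delta_lt[OF \<pi>] lQ by (metis last_conv_nth)
  moreover have "1 \<le> n"
    using \<pi> by (cases n) (auto simp: Delta_lt_def)
  ultimately have sum: "k + sum_list g = n"
    using pos[of "k - 1"] letter_pos_last[of g "k - 1"] lg k_pos by simp
  have "\<pi> = inflate \<sigma> g"
  proof (rule nth_equalityI)
    show length_eq: "length \<pi> = length (inflate \<sigma> g)"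
      using length_inflate[OF lg] sum ln by simp
    fix i assume i: "i < length \<pi>"
    show "\<pi> ! i = inflate \<sigma> g ! i"
    proof (cases "i \<in> set ?Q")
      case True
      then obtain t where t: "t < k" and i_eq: "i = letter_pos g t"
        using lQ pos by (auto simp: in_set_conv_nth)
      have "\<pi> ! i = relabel g (\<sigma> ! t)"
        using nonfixed_nth_eq_relabel[OF \<pi>_signed dp pos t] i_eq pos[OF t] by simp
      then show ?thesis
        using inflate_nth_letter[OF lg t] i_eq by simp
    next
      case False
      then have "i \<notin> letter_pos g ` {..<k}"
        using pos lQ by (auto simp: in_set_conv_nth)
      then show ?thesis
        using False i inflate_nth_fixed[OF lg] length_eq by (simp add: set_nonfixed_positions)
    qed
  qed
  then show ?thesis
    using that lg sum by simp
qed

lemma dp_fibre_eq_image_inflate: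
  assumes "k \<le> n"
  shows "{\<pi> \<in> Delta_lt n. dp \<pi> = \<sigma>} = inflate \<sigma> ` weak_compositions k (n - k)"
proof (intro set_eqI iffI)
  fix \<pi> assume "\<pi> \<in> {\<pi> \<in> Delta_lt n. dp \<pi> = \<sigma>}"
  then show "\<pi> \<in> inflate \<sigma> ` weak_compositions k (n - k)"
    by (auto simp: weak_compositions_def elim!: Delta_lt_dp_eq_inflate)
next
  fix \<pi> assume "\<pi> \<in> inflate \<sigma> ` weak_compositions k (n - k)"
  then obtain g where g: "length g = k" "sum_list g = n - k" and "\<pi> = inflate \<sigma> g"
    by (auto simp: weak_compositions_def)
  moreover have "k + sum_list g = n"
    using g assms by simp
  ultimately show "\<pi> \<in> {\<pi> \<in> Delta_lt n. dp \<pi> = \<sigma>}"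
    using inflate_Delta_lt[OF g(1)] dp_inflate[OF g(1)] by simp
qed

end

section \<open>Flag major index of an inflation\<close>

context inflation
begin

definition non_excedance :: "nat \<Rightarrow> bool" where
  "non_excedance t \<longleftrightarrow> \<sigma> ! t < int (t + 1)"

definition prec_descent :: "nat \<Rightarrow> bool" where
  "prec_descent t \<longleftrightarrow> prec (\<sigma> ! t) (\<sigma> ! (t - 1))"

lemma non_excedance_last: "non_excedance (k - 1)"
proof -
  have "\<sigma> ! (k - 1) \<noteq> int k" "\<sigma> ! (k - 1) \<le> int k"
    using sigma_nonfixed[of "k - 1"] signed_perms_nth_abs_bounds[OF sigma_signed, of "k - 1"] k_pos
    by auto
  then show ?thesis
    using k_pos by (simp add: non_excedance_def)
qed

lemma prec_descent_if_non_excedance_starts: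
  assumes "1 \<le> t" "t < k" "\<not> non_excedance (t - 1)" "non_excedance t"
  shows "prec_descent t"
proof -
  have "\<sigma> ! (t - 1) \<noteq> int t"
    using sigma_nonfixed[of "t - 1"] assms(1,2) by simp
  then show ?thesis
    using assms sigma_nonzero[of t] by (auto simp: prec_descent_def non_excedance_def prec_def)
qed

lemma not_prec_descent_if_non_excedance_ends:
  "1 \<le> t \<Longrightarrow> t < k \<Longrightarrow> non_excedance (t - 1) \<Longrightarrow> \<not> non_excedance t \<Longrightarrow> \<not> prec_descent t"
  by (auto simp: prec_descent_def non_excedance_def prec_def)

lemma descent_sum_eq_maj_prec: "descent_sum prec_descent k = maj_prec \<sigma>"
  unfolding maj_prec_eq_sum descent_sum_def length_sigma prec_descent_def ..

context
  fixes g :: "nat list"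
  assumes g: "length g = k"
begin

lemma prec_fixed_relabel_iff:
  assumes t: "0 < t" "t < k" and h: "0 < g ! t"
  shows "prec (int (letter_pos g (t - 1) + 2)) (relabel g (\<sigma> ! (t - 1))) \<longleftrightarrow> \<not> non_excedance (t - 1)"
proof (cases "0 < \<sigma> ! (t - 1)")
  case False
  then have "relabel g (\<sigma> ! (t - 1)) \<le> 0"
    using relabel_pos_iff by (meson not_less)
  then show ?thesis
    using False by (auto simp: prec_def non_excedance_def)
next
  case True
  define c where "c = nat (\<sigma> ! (t - 1)) - 1"
  have relabel_eq: "relabel g (\<sigma> ! (t - 1)) = int (letter_pos g c + 1)"
    using True by (simp add: relabel_def c_def)
  have "letter_pos g t = letter_pos g (t - 1) + 1 + g ! t"
    using letter_pos_Suc[of "t - 1" g] t g by simp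
  moreover have "\<sigma> ! (t - 1) \<noteq> int t"
    using sigma_nonfixed[of "t - 1"] t by simp
  then have "t \<le> c \<longleftrightarrow> \<not> non_excedance (t - 1)"
    using True t by (auto simp: non_excedance_def c_def)
  ultimately show ?thesis
    using relabel_eq h True strict_mono_less_eq[OF strict_mono_letter_pos[of g], of t c]
      strict_mono_less_eq[OF strict_mono_letter_pos[of g], of c "t - 1"]
    by (cases "t \<le> c") (auto simp: prec_def)
qed

lemma prec_relabel_fixed_iff:
  assumes t: "t < k" and h: "0 < g ! t"
  shows "prec (relabel g (\<sigma> ! t)) (int (letter_pos g t)) \<longleftrightarrow> non_excedance t"
proof (cases "0 < \<sigma> ! t")
  case False
  have "0 < letter_pos g t"
    using t g h by (auto simp: letter_pos_def take_Suc_conv_app_nth)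
  then show ?thesis
    using False sigma_nonzero[OF t] relabel_neg_iff[of g "\<sigma> ! t"]
    by (auto simp: prec_def non_excedance_def)
next
  case True
  define c where "c = nat (\<sigma> ! t) - 1"
  have relabel_eq: "relabel g (\<sigma> ! t) = int (letter_pos g c + 1)"
    using True by (simp add: relabel_def c_def)
  have "c < t \<longleftrightarrow> non_excedance t"
    using True by (auto simp: non_excedance_def c_def)
  moreover have "c < t \<Longrightarrow> letter_pos g t = letter_pos g (t - 1) + 1 + g ! t"
    using letter_pos_Suc[of "t - 1" g] t g by simp
  ultimately show ?thesis
    using relabel_eq h True strict_mono_less_eq[OF strict_mono_letter_pos[of g], of c "t - 1"]
      strict_mono_less_eq[OF strict_mono_letter_pos[of g], of t c]
    by (cases "c < t") (auto simp: prec_def)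
qed

lemma maj_prec_inflate_prefix_Suc:
  assumes t: "t < k"
  shows "maj_prec (inflate_prefix \<sigma> g (Suc t)) = maj_prec (inflate_prefix \<sigma> g t)
    + block_maj non_excedance prec_descent t (sum_list (take t g)) (g ! t)"
proof -
  define s where "s = sum_list (take t g)"
  define h where "h = g ! t"
  let ?w = "inflate_prefix \<sigma> g t"
  let ?run = "map (\<lambda>i. int (i + 1)) [length ?w..<letter_pos g t]"
  have len: "length ?w = t + s"
    by (simp add: length_inflate_prefix s_def)
  have pos: "letter_pos g t = t + s + h"
    using t g by (simp add: letter_pos_def s_def h_def take_Suc_conv_app_nth)
  have nonempty: "?w \<noteq> [] \<longleftrightarrow> 0 < t"
    using len by (cases t) (auto simp: s_def)
  have last: "0 < t \<Longrightarrow> last ?w = relabel g (\<sigma> ! (t - 1))"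
    by (cases t) auto
  have step: "inflate_prefix \<sigma> g (Suc t) = (?w @ ?run) @ [relabel g (\<sigma> ! t)]"
    by simp
  have "maj_prec (inflate_prefix \<sigma> g (Suc t)) = maj_prec ?w + block_maj non_excedance prec_descent t s h"
  proof (cases "h = 0")
    case True
    then have run_nil: "?w @ ?run = ?w"
      using len pos by simp
    have "maj_prec (inflate_prefix \<sigma> g (Suc t)) = maj_prec ?w
        + (if 0 < t \<and> prec (relabel g (\<sigma> ! t)) (relabel g (\<sigma> ! (t - 1))) then t + s else 0)"
      unfolding step run_nil maj_prec_snoc using nonempty last len by auto
    moreover have "0 < t \<Longrightarrow> prec (relabel g (\<sigma> ! t)) (relabel g (\<sigma> ! (t - 1))) \<longleftrightarrow> prec_descent t"
      using prec_relabel_iff sigma_nonzero t by (simp add: prec_descent_def)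
    ultimately show ?thesis
      using True by (auto simp: block_maj_def)
  next
    case False
    have lt: "length ?w < letter_pos g t"
      using len pos False by simp
    have "maj_prec (?w @ ?run)
        = maj_prec ?w + (if 0 < t \<and> prec (int (t + s + 1)) (relabel g (\<sigma> ! (t - 1))) then t + s else 0)"
      using maj_prec_append_fixed_run[of ?w "t + s" "letter_pos g t"] len lt nonempty last by auto
    moreover have "0 < t \<Longrightarrow> prec (int (t + s + 1)) (relabel g (\<sigma> ! (t - 1))) \<longleftrightarrow> \<not> non_excedance (t - 1)"
      using prec_fixed_relabel_iff[of t] t False len length_inflate_prefix[of \<sigma> g t]
        letter_pos_last[of g] by (cases t) (auto simp: h_def letter_pos_def s_def take_Suc_conv_app_nth g)
    moreover have "maj_prec (inflate_prefix \<sigma> g (Suc t)) = maj_prec (?w @ ?run)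
        + (if prec (relabel g (\<sigma> ! t)) (int (letter_pos g t)) then letter_pos g t else 0)"
      unfolding step maj_prec_snoc using lt by (simp add: last_map)
    moreover have "prec (relabel g (\<sigma> ! t)) (int (letter_pos g t)) \<longleftrightarrow> non_excedance t"
      using prec_relabel_fixed_iff[OF t] False by (simp add: h_def)
    ultimately show ?thesis
      using False pos by (auto simp: block_maj_def)
  qed
  then show ?thesis
    by (simp add: s_def h_def)
qed

lemma maj_prec_inflate_prefix:
  "j \<le> k \<Longrightarrow> maj_prec (inflate_prefix \<sigma> g j) = maj_weight non_excedance prec_descent (take j g)"
proof (induction j)
  case (Suc t)
  then show ?case
    using g by (simp add: maj_prec_inflate_prefix_Suc take_Suc_conv_app_nth maj_weight_snoc
        del: inflate_prefix.simps)
qed (simp add: maj_weight_def maj_prec_def)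

lemma maj_prec_inflate: "maj_prec (inflate \<sigma> g) = maj_weight non_excedance prec_descent g"
  using maj_prec_inflate_prefix[of k] g by (simp add: inflate_def length_sigma)

lemma negative_positions_inflate:
  "{i. i < length (inflate \<sigma> g) \<and> inflate \<sigma> g ! i < 0} = letter_pos g ` {t. t < k \<and> \<sigma> ! t < 0}"
proof (intro set_eqI iffI)
  fix i assume i: "i \<in> {i. i < length (inflate \<sigma> g) \<and> inflate \<sigma> g ! i < 0}"
  then have "i \<in> letter_pos g ` {..<k}"
    using inflate_nth_fixed[OF g] by force
  then show "i \<in> letter_pos g ` {t. t < k \<and> \<sigma> ! t < 0}"
    using i inflate_nth_letter[OF g] by (auto simp: relabel_neg_iff)
qed (auto simp: inflate_nth_letter[OF g] letter_pos_less_length[OF g] relabel_neg_iff)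

lemma neg_inflate: "neg (inflate \<sigma> g) = neg \<sigma>"
  unfolding neg_def length_sigma negative_positions_inflate
  by (simp add: card_image strict_mono_imp_inj_on[OF strict_mono_letter_pos] inj_on_subset)

end

end

section \<open>Parity of the length\<close>

lemma signed_perms_card_abs_le:
  assumes w: "w \<in> signed_perms n" and "m \<le> n"
  shows "card {p. p < n \<and> \<bar>w ! p\<bar> \<le> int m} = m"
proof -
  have "(\<lambda>p. \<bar>w ! p\<bar>) ` {p. p < n \<and> \<bar>w ! p\<bar> \<le> int m} = {1..int m}"
  proof (intro set_eqI iffI)
    fix v assume "v \<in> {1..int m}"
    then obtain p where "p < n" "\<bar>w ! p\<bar> = v"
      using signed_perms_nth_abs_surj[OF w, of v] assms(2) by auto
    with \<open>v \<in> {1..int m}\<close> show "v \<in> (\<lambda>p. \<bar>w ! p\<bar>) ` {p. p < n \<and> \<bar>w ! p\<bar> \<le> int m}"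
      by force
  qed (use signed_perms_nth_abs_bounds[OF w] in auto)
  moreover have "inj_on (\<lambda>p. \<bar>w ! p\<bar>) {p. p < n \<and> \<bar>w ! p\<bar> \<le> int m}"
    using signed_perms_nth_abs_inj[OF w] by (auto simp: inj_on_def)
  ultimately have "card {p. p < n \<and> \<bar>w ! p\<bar> \<le> int m} = card {1..int m}"
    using card_image by fastforce
  then show ?thesis
    by simp
qed

lemma signed_perms_fixed_point_balance:
  assumes w: "w \<in> signed_perms n" and f: "f < n" "w ! f = int (f + 1)"
  shows "card {p. p < f \<and> int (f + 1) < \<bar>w ! p\<bar>} = card {p. f < p \<and> p < n \<and> \<bar>w ! p\<bar> < int (f + 1)}"
proof -
  let ?C = "{p. p < f \<and> \<bar>w ! p\<bar> \<le> int f}"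
  let ?A = "{p. p < f \<and> int (f + 1) < \<bar>w ! p\<bar>}"
  let ?B = "{p. f < p \<and> p < n \<and> \<bar>w ! p\<bar> < int (f + 1)}"
  have other: "\<bar>w ! p\<bar> \<noteq> int (f + 1)" if "p < n" "p \<noteq> f" for p
    using signed_perms_nth_abs_inj[OF w that(1) f(1)] f that by auto
  have "{..<f} = ?C \<union> ?A"
  proof (intro set_eqI iffI)
    fix p assume "p \<in> {..<f}"
    then show "p \<in> ?C \<union> ?A"
      using other[of p] f(1) by auto
  qed auto
  moreover have "card (?C \<union> ?A) = card ?C + card ?A"
    by (rule card_Un_disjoint) auto
  ultimately have "f = card ?C + card ?A"
    by (metis card_lessThan)
  moreover have "{p. p < n \<and> \<bar>w ! p\<bar> \<le> int f} = ?C \<union> ?B"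
  proof (intro set_eqI iffI)
    fix p assume "p \<in> {p. p < n \<and> \<bar>w ! p\<bar> \<le> int f}"
    moreover have "p \<noteq> f" if "\<bar>w ! p\<bar> \<le> int f"
      using that f(2) by auto
    ultimately show "p \<in> ?C \<union> ?B"
      by (auto simp: not_less_iff_gr_or_eq)
  qed (use f(1) in auto)
  moreover have "card (?C \<union> ?B) = card ?C + card ?B"
    by (rule card_Un_disjoint) auto
  ultimately have "card ?C + card ?A = card ?C + card ?B"
    using signed_perms_card_abs_le[OF w, of f] f(1) by simp
  then show ?thesis
    by simp
qed

definition fixed_positions :: "int list \<Rightarrow> nat set" where
  "fixed_positions w = {i. i < length w \<and> w ! i = int (i + 1)}"

definition fixed_point_inversions :: "int list \<Rightarrow> nat \<Rightarrow> nat" where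
  "fixed_point_inversions w f =
     card {p. p < f \<and> int (f + 1) < w ! p} + card {p. f < p \<and> p < length w \<and> w ! p < int (f + 1)}"

definition neg_count_below :: "int list \<Rightarrow> nat \<Rightarrow> nat" where
  "neg_count_below w f = card {p. p < length w \<and> w ! p < - int (f + 1)}"

lemma signed_perms_fixed_point_parity:
  assumes w: "w \<in> signed_perms n" and f: "f \<in> fixed_positions w"
  shows "even (fixed_point_inversions w f + neg_count_below w f)"
proof -
  have n: "length w = n"
    using w by (rule signed_perms_length)
  have f: "f < n" "w ! f = int (f + 1)"
    using f n by (auto simp: fixed_positions_def)
  let ?A = "{p. p < f \<and> int (f + 1) < \<bar>w ! p\<bar>}"
  let ?B = "{p. f < p \<and> p < n \<and> \<bar>w ! p\<bar> < int (f + 1)}"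
  let ?NL = "{p. p < f \<and> w ! p < - int (f + 1)}"
  let ?NG = "{p. f < p \<and> p < n \<and> w ! p < - int (f + 1)}"
  have other: "\<bar>w ! p\<bar> \<noteq> int (f + 1)" if "p < n" "p \<noteq> f" for p
    using signed_perms_nth_abs_inj[OF w that(1) f(1)] f that by auto
  have "{p. p < f \<and> int (f + 1) < w ! p} = ?A - ?NL"
    by auto
  moreover have "?NL \<subseteq> ?A"
    by auto
  ultimately have left: "card {p. p < f \<and> int (f + 1) < w ! p} = card ?A - card ?NL"
    and "card ?NL \<le> card ?A"
    by (simp_all add: card_Diff_subset card_mono)
  have "{p. f < p \<and> p < n \<and> w ! p < int (f + 1)} = ?B \<union> ?NG"
  proof (intro set_eqI iffI)
    fix p assume "p \<in> {p. f < p \<and> p < n \<and> w ! p < int (f + 1)}"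
    then show "p \<in> ?B \<union> ?NG"
      using other[of p] by (auto simp: abs_if)
  qed auto
  moreover have "card (?B \<union> ?NG) = card ?B + card ?NG"
    by (rule card_Un_disjoint) auto
  ultimately have right: "card {p. f < p \<and> p < n \<and> w ! p < int (f + 1)} = card ?B + card ?NG"
    by simp
  have "{p. p < n \<and> w ! p < - int (f + 1)} = ?NL \<union> ?NG"
    using f by (auto simp: not_less_iff_gr_or_eq)
  moreover have "card (?NL \<union> ?NG) = card ?NL + card ?NG"
    by (rule card_Un_disjoint) auto
  ultimately have neg: "card {p. p < n \<and> w ! p < - int (f + 1)} = card ?NL + card ?NG"
    by simp
  show ?thesis
    unfolding fixed_point_inversions_def neg_count_below_def n left right neg
      signed_perms_fixed_point_balance[OF w f, symmetric]
    using \<open>card ?NL \<le> card ?A\<close> by presburger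
qed

lemma card_filter_eq_sum: "finite B \<Longrightarrow> card {b \<in> B. Q b} = (\<Sum>b\<in>B. if Q b then 1 else 0)"
  using sum.inter_filter[of B "\<lambda>_. 1 :: nat" Q] by simp

lemma sum_card_filter_swap:
  assumes "finite A" "finite B"
  shows "(\<Sum>a\<in>A. card {b \<in> B. P a b}) = (\<Sum>b\<in>B. card {a \<in> A. P a b})"
  using assms by (simp add: card_filter_eq_sum sum.swap[of _ A])

context inflation
begin

context
  fixes g :: "nat list"
  assumes g: "length g = k"
begin

lemma fixed_positions_inflate:
  "fixed_positions (inflate \<sigma> g) = {..<length (inflate \<sigma> g)} - letter_pos g ` {..<k}"
  using inflate_nonfixed_iff[OF g] by (auto simp: fixed_positions_def)

lemma inflate_letter_inversions:
  "card {(i, j). i < j \<and> j < length (inflate \<sigma> g) \<and> inflate \<sigma> g ! j < inflate \<sigma> g ! i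
          \<and> i \<in> letter_pos g ` {..<k} \<and> j \<in> letter_pos g ` {..<k}} = inv_count \<sigma>"
proof -
  let ?w = "inflate \<sigma> g" and ?P = "\<lambda>(a, b). (letter_pos g a, letter_pos g b)"
  have mono: "letter_pos g a < letter_pos g b \<longleftrightarrow> a < b" for a b
    by (rule strict_mono_less[OF strict_mono_letter_pos])
  have "{(i, j). i < j \<and> j < length ?w \<and> ?w ! j < ?w ! i
          \<and> i \<in> letter_pos g ` {..<k} \<and> j \<in> letter_pos g ` {..<k}}
      = ?P ` {(a, b). a < b \<and> b < length \<sigma> \<and> \<sigma> ! b < \<sigma> ! a}"
    using letter_pos_less_length[OF g] length_sigma
    by (auto simp: mono inflate_nth_letter[OF g] relabel_less_iff sigma_nonzero image_iff)
  moreover have "inj_on ?P {(a, b). a < b \<and> b < length \<sigma> \<and> \<sigma> ! b < \<sigma> ! a}"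
    using strict_mono_eq[OF strict_mono_letter_pos] by (auto simp: inj_on_def)
  ultimately show ?thesis
    by (simp add: inv_count_def card_image)
qed

lemma inv_count_inflate:
  "inv_count (inflate \<sigma> g)
     = inv_count \<sigma> + (\<Sum>f\<in>fixed_positions (inflate \<sigma> g). fixed_point_inversions (inflate \<sigma> g) f)"
proof -
  let ?w = "inflate \<sigma> g" and ?n = "length (inflate \<sigma> g)" and ?L = "letter_pos g ` {..<k}"
  let ?F = "fixed_positions (inflate \<sigma> g)"
  define I where "I = {(i, j). i < j \<and> j < ?n \<and> ?w ! j < ?w ! i}"
  have fin: "finite I"
    by (rule finite_subset[of _ "{..<?n} \<times> {..<?n}"]) (auto simp: I_def)
  have F: "i \<in> ?F \<longleftrightarrow> i < ?n \<and> i \<notin> ?L" for i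
    by (simp add: fixed_positions_inflate)
  have no_fixed_pair: "\<not> (i \<in> ?F \<and> j \<in> ?F)" if "(i, j) \<in> I" for i j
    using that by (auto simp: I_def fixed_positions_def)
  define ILL where "ILL = {(i, j) \<in> I. i \<in> ?L \<and> j \<in> ?L}"
  define ILF where "ILF = {(i, j) \<in> I. j \<in> ?F}"
  define IFL where "IFL = {(i, j) \<in> I. i \<in> ?F}"
  have "I = (ILL \<union> ILF) \<union> IFL"
    using F by (auto simp: I_def ILL_def ILF_def IFL_def)
  moreover have "finite ILL" "finite ILF" "finite IFL"
    by (auto intro: finite_subset[OF _ fin] simp: ILL_def ILF_def IFL_def)
  moreover have "ILL \<inter> ILF = {}" "(ILL \<union> ILF) \<inter> IFL = {}"
    using F no_fixed_pair by (auto simp: ILL_def ILF_def IFL_def)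
  ultimately have "card I = card ILL + card ILF + card IFL"
    by (simp add: card_Un_disjoint)
  moreover have "card ILL = inv_count \<sigma>"
    using inflate_letter_inversions by (simp add: ILL_def I_def case_prod_unfold conj_ac)
  moreover have "ILF = (\<lambda>(f, p). (p, f)) ` (SIGMA f:?F. {p. p < f \<and> int (f + 1) < ?w ! p})"
    by (auto simp: ILF_def I_def fixed_positions_def image_iff)
  then have "card ILF = (\<Sum>f\<in>?F. card {p. p < f \<and> int (f + 1) < ?w ! p})"
    by (simp add: card_image inj_on_def card_SigmaI fixed_positions_def)
  moreover have "IFL = (SIGMA f:?F. {p. f < p \<and> p < ?n \<and> ?w ! p < int (f + 1)})"
    by (auto simp: IFL_def I_def fixed_positions_def)
  then have "card IFL = (\<Sum>f\<in>?F. card {p. f < p \<and> p < ?n \<and> ?w ! p < int (f + 1)})"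
    by (simp add: card_SigmaI fixed_positions_def)
  ultimately show ?thesis
    by (simp add: inv_count_def I_def fixed_point_inversions_def sum.distrib)
qed

lemma card_fixed_positions_below:
  assumes c: "c < k"
  shows "card {f \<in> fixed_positions (inflate \<sigma> g). f < letter_pos g c} = letter_pos g c - c"
proof -
  let ?B = "{f \<in> fixed_positions (inflate \<sigma> g). f < letter_pos g c}"
  have mono: "letter_pos g a < letter_pos g c \<longleftrightarrow> a < c" for a
    by (rule strict_mono_less[OF strict_mono_letter_pos])
  have "{..<letter_pos g c} = ?B \<union> letter_pos g ` {..<c}"
    using letter_pos_less_length[OF g c] c
    by (auto simp: fixed_positions_inflate mono)
  moreover have "?B \<inter> letter_pos g ` {..<c} = {}"
    using c by (auto simp: fixed_positions_inflate)
  moreover have "card (letter_pos g ` {..<c}) = c"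
    using strict_mono_imp_inj_on[OF strict_mono_letter_pos] by (simp add: card_image inj_on_subset)
  ultimately have "letter_pos g c = card ?B + c"
    by (metis card_Un_disjoint card_lessThan finite_Un finite_lessThan)
  then show ?thesis
    by simp
qed

lemma inflate_nth_negative_letter:
  "t < k \<Longrightarrow> \<sigma> ! t < 0 \<Longrightarrow> inflate \<sigma> g ! letter_pos g t = - int (letter_pos g (nat \<bar>\<sigma> ! t\<bar> - 1) + 1)"
  by (simp add: inflate_nth_letter[OF g] relabel_def)

lemma neg_count_below_inflate:
  "neg_count_below (inflate \<sigma> g) f
     = card {t. t < k \<and> \<sigma> ! t < 0 \<and> f < letter_pos g (nat \<bar>\<sigma> ! t\<bar> - 1)}"
proof -
  let ?w = "inflate \<sigma> g" and ?T = "{t. t < k \<and> \<sigma> ! t < 0 \<and> f < letter_pos g (nat \<bar>\<sigma> ! t\<bar> - 1)}"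
  have "{p. p < length ?w \<and> ?w ! p < - int (f + 1)} = letter_pos g ` ?T"
  proof (intro set_eqI iffI)
    fix p assume p: "p \<in> {p. p < length ?w \<and> ?w ! p < - int (f + 1)}"
    then have "p \<in> {i. i < length ?w \<and> ?w ! i < 0}"
      by auto
    then obtain t where "t < k" "\<sigma> ! t < 0" "p = letter_pos g t"
      unfolding negative_positions_inflate[OF g] by blast
    then show "p \<in> letter_pos g ` ?T"
      using p inflate_nth_negative_letter by auto
  qed (auto simp: inflate_nth_negative_letter letter_pos_less_length[OF g])
  then show ?thesis
    unfolding neg_count_below_def
    by (simp add: card_image strict_mono_imp_inj_on[OF strict_mono_letter_pos] inj_on_subset)
qed

lemma neg_sum_inflate:
  "(\<Sum>i\<in>{i. i < length (inflate \<sigma> g) \<and> inflate \<sigma> g ! i < 0}. inflate \<sigma> g ! i)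
     = (\<Sum>i\<in>{i. i < length \<sigma> \<and> \<sigma> ! i < 0}. \<sigma> ! i)
       - int (\<Sum>f\<in>fixed_positions (inflate \<sigma> g). neg_count_below (inflate \<sigma> g) f)"
proof -
  let ?w = "inflate \<sigma> g" and ?F = "fixed_positions (inflate \<sigma> g)"
  define T where "T = {t. t < k \<and> \<sigma> ! t < 0}"
  define c where "c t = nat \<bar>\<sigma> ! t\<bar> - 1" for t
  have inj: "inj_on (letter_pos g) T"
    using strict_mono_imp_inj_on[OF strict_mono_letter_pos] by (blast intro: inj_on_subset)
  have c: "c t < k" "\<sigma> ! t = - int (c t + 1)" "?w ! letter_pos g t = - int (letter_pos g (c t) + 1)"
    if "t \<in> T" for t
    using that sigma_abs_index_less[of t] inflate_nth_negative_letter[of t]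
    by (auto simp: T_def c_def)
  have "(\<Sum>i\<in>{i. i < length ?w \<and> ?w ! i < 0}. ?w ! i) = (\<Sum>t\<in>T. ?w ! letter_pos g t)"
    unfolding negative_positions_inflate[OF g] T_def[symmetric] by (simp add: sum.reindex[OF inj])
  also have "\<dots> = - (\<Sum>t\<in>T. int (letter_pos g (c t) + 1))"
    unfolding sum_negf[symmetric] by (rule sum.cong) (simp_all add: c)
  finally have w_sum: "(\<Sum>i\<in>{i. i < length ?w \<and> ?w ! i < 0}. ?w ! i)
      = - (\<Sum>t\<in>T. int (letter_pos g (c t) + 1))" .
  have sigma_sum: "(\<Sum>i\<in>{i. i < length \<sigma> \<and> \<sigma> ! i < 0}. \<sigma> ! i) = - (\<Sum>t\<in>T. int (c t + 1))"
    unfolding sum_negf[symmetric] length_sigma T_def[symmetric] by (rule sum.cong) (simp_all add: c)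
  have below: "card {t \<in> T. f < letter_pos g (c t)} = neg_count_below ?w f" for f
    by (simp add: neg_count_below_inflate T_def c_def conj_assoc)
  have "finite T" "finite ?F"
    by (simp_all add: T_def fixed_positions_def)
  then have swap: "(\<Sum>t\<in>T. card {f \<in> ?F. f < letter_pos g (c t)}) = (\<Sum>f\<in>?F. neg_count_below ?w f)"
    by (simp only: sum_card_filter_swap below)
  \<comment> \<open>A negative letter of absolute value \<open>c + 1\<close> grows by the number of fixed points
    below position \<open>letter_pos g c\<close>; counting these per fixed point gives \<open>neg_count_below\<close>.\<close>
  have "(\<Sum>t\<in>T. int (letter_pos g (c t) + 1)) - (\<Sum>t\<in>T. int (c t + 1))
      = int (\<Sum>t\<in>T. card {f \<in> ?F. f < letter_pos g (c t)})"
    unfolding sum_subtractf[symmetric] of_nat_sum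
    by (intro sum.cong refl) (simp add: card_fixed_positions_below c of_nat_diff letter_pos_ge)
  also have "\<dots> = int (\<Sum>f\<in>?F. neg_count_below ?w f)"
    by (simp only: swap)
  finally show ?thesis
    unfolding w_sum sigma_sum by linarith
qed

lemma ellB_inflate_parity: "even (ellB (inflate \<sigma> g) - ellB \<sigma>)"
proof -
  let ?w = "inflate \<sigma> g" and ?F = "fixed_positions (inflate \<sigma> g)"
  have diff: "ellB ?w - ellB \<sigma> = int (\<Sum>f\<in>?F. fixed_point_inversions ?w f + neg_count_below ?w f)"
    unfolding ellB_def inv_count_inflate neg_sum_inflate length_sigma by (simp add: sum.distrib)
  have "even (\<Sum>f\<in>?F. fixed_point_inversions ?w f + neg_count_below ?w f)"
    using signed_perms_fixed_point_parity[OF inflate_signed_perm[OF g]] by (simp add: dvd_sum)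
  then show ?thesis
    by (simp only: diff even_of_nat)
qed

end

end

section \<open>The fibre sum\<close>

lemma power_int_sign_even_diff:
  fixes x :: "'a :: field"
  assumes "x = 1 \<or> x = -1" and "even (a - b)"
  shows "x powi a = x powi b"
proof -
  obtain m where a: "a = b + 2 * m"
    using assms(2) by (metis dvd_def add_diff_cancel_left' diff_add_cancel)
  have "x powi (2 * m) = (x powi 2) powi m"
    by (rule power_int_mult)
  also have "x powi 2 = 1"
    using assms(1) by auto
  finally show ?thesis
    unfolding a using assms(1) by (auto simp: power_int_add)
qed

context inflation
begin

lemma fmaj_inflate:
  "length g = k \<Longrightarrow> fmaj (inflate \<sigma> g) = 2 * maj_weight non_excedance prec_descent g + neg \<sigma>"
  by (simp add: fmaj_def maj_prec_inflate neg_inflate)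

lemma inj_on_inflate: "inj_on (inflate \<sigma>) (weak_compositions k r)"
  by (auto simp: inj_on_def weak_compositions_def intro: inflate_inj)

lemma sum_weak_compositions_maj_weight_inflation:
  "(\<Sum>g\<in>weak_compositions k r. x ^ maj_weight non_excedance prec_descent g)
     = x ^ (maj_prec \<sigma> + r) * gauss_binom x r (k - 1)" if "0 \<le> x"
  using sum_weak_compositions_maj_weight[OF that, of "k - 1" non_excedance prec_descent r] k_pos
    prec_descent_if_non_excedance_starts not_prec_descent_if_non_excedance_ends non_excedance_last
  by (simp add: descent_sum_eq_maj_prec)

end

theorem proposition5p3:
  fixes \<epsilon> q :: real and n k :: nat and \<sigma> :: "int list"
  assumes "\<epsilon> = 1 \<or> \<epsilon> = -1"
    and "1 \<le> k" and "k \<le> n"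
    and "\<sigma> \<in> D_Delta k"
  shows "(\<Sum>\<pi>\<in>{\<pi> \<in> Delta_lt n. dp \<pi> = \<sigma>}. \<epsilon> powi ellB \<pi> * q ^ fmaj \<pi>)
         = \<epsilon> powi ellB \<sigma> * q ^ (2 * (n - k) + fmaj \<sigma>) * qbinom (n - 1) (k - 1) (q\<^sup>2)"
proof -
  interpret inflation \<sigma> k
    using assms(4,2) by unfold_locales
  let ?W = "weak_compositions k (n - k)" and ?maj = "maj_weight non_excedance prec_descent"
  have "\<epsilon> powi ellB (inflate \<sigma> g) * q ^ fmaj (inflate \<sigma> g) = \<epsilon> powi ellB \<sigma> * q ^ neg \<sigma> * (q\<^sup>2) ^ ?maj g"
    if "g \<in> ?W" for g
    using that power_int_sign_even_diff[OF assms(1) ellB_inflate_parity] fmaj_inflate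
    by (simp add: weak_compositions_def power_add power_mult)
  then have "(\<Sum>\<pi>\<in>{\<pi> \<in> Delta_lt n. dp \<pi> = \<sigma>}. \<epsilon> powi ellB \<pi> * q ^ fmaj \<pi>)
      = \<epsilon> powi ellB \<sigma> * q ^ neg \<sigma> * (\<Sum>g\<in>?W. (q\<^sup>2) ^ ?maj g)"
    by (simp add: dp_fibre_eq_image_inflate[OF assms(3)] sum.reindex[OF inj_on_inflate] sum_distrib_left)
  also have "\<dots> = \<epsilon> powi ellB \<sigma> * q ^ neg \<sigma> * ((q\<^sup>2) ^ (maj_prec \<sigma> + (n - k)) * qbinom (n - 1) (k - 1) (q\<^sup>2))"
    using assms(2,3) by (simp add: sum_weak_compositions_maj_weight_inflation gauss_binom_eq_qbinom)
  also have "\<dots> = \<epsilon> powi ellB \<sigma> * q ^ (2 * (n - k) + fmaj \<sigma>) * qbinom (n - 1) (k - 1) (q\<^sup>2)"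
    by (simp add: fmaj_def power_add power_mult[symmetric] mult_ac)
  finally show ?thesis .
qed

end
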